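(* Let $G,D\subsetneq\mathbb{R}^n$ be domains, and let $f:G\to D$ be a surjective mapping and $L\ge1$ such that \[ b_{G,\infty}(z_1,z_2)/L\le b_{D,\infty}(f(z_1),f(z_2))\le L\,b_{G,\infty}(z_1,z_2)\quad\text{for all } z_1,z_2\in G. \] Then $f$ is a quasiconformal homeomorphism (either sense-preserving or sense-reversing), and its linear dilatation satisfies $H_f(z)\le 4L^2$ for all $z\in G$.
   Context: For a domain $G\subsetneq\mathbb{R}^n$ and $z_1,z_2\in G$, $b_{G,\infty}(z_1,z_2)=\sup_{w\in\partial G}\frac{|z_1-z_2|}{\max\{|z_1-w|,|z_2-w|\}}$. For a homeomorphism $f$ and $z\in G$, the linear dilatation is $H_f(z)=\limsup_{r\to0}\frac{L_f(z,r)}{l_f(z,r)}$, where $L_f(z,r)=\sup\{|f(z_1)-f(z)|:|z_1-z|=r\}$ and $l_f(z,r)=\inf\{|f(z_1)-f(z)|:|z_1-z|=r\}$. *)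

theory Defs
  imports "HOL-Analysis.Analysis"
begin

definition domain :: "'a::euclidean_space set \<Rightarrow> bool" where
  "domain G \<longleftrightarrow> open G \<and> connected G \<and> G \<noteq> {}"

definition b_inf :: "'a::euclidean_space set \<Rightarrow> 'a \<Rightarrow> 'a \<Rightarrow> real" where
  "b_inf G z1 z2 = (SUP w\<in>frontier G. dist z1 z2 / max (dist z1 w) (dist z2 w))"

definition Lf :: "('a::euclidean_space \<Rightarrow> 'b::euclidean_space) \<Rightarrow> 'a \<Rightarrow> real \<Rightarrow> real" where
  "Lf f z r = (SUP y\<in>sphere z r. dist (f y) (f z))"

definition lf :: "('a::euclidean_space \<Rightarrow> 'b::euclidean_space) \<Rightarrow> 'a \<Rightarrow> real \<Rightarrow> real" where
  "lf f z r = (INF y\<in>sphere z r. dist (f y) (f z))"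

definition lin_dil :: "('a::euclidean_space \<Rightarrow> 'b::euclidean_space) \<Rightarrow> 'a \<Rightarrow> ereal" where
  "lin_dil f z = Limsup (at_right 0) (\<lambda>r. ereal (Lf f z r / lf f z r))"

text \<open>Metric definition of quasiconformality: a homeomorphism G -> D with
  linear dilatation bounded in G.\<close>
definition quasiconformal :: "'a::euclidean_space set \<Rightarrow> 'a set \<Rightarrow> ('a \<Rightarrow> 'a) \<Rightarrow> bool" where
  "quasiconformal G D f \<longleftrightarrow> (\<exists>g. homeomorphism G D f g) \<and> (\<exists>H. \<forall>z\<in>G. lin_dil f z \<le> ereal H)"

end

theory Submission
  imports Defs
begin

text \<open>Let d(z) be the distance from z to the boundary. Testing the supremum in b_inf at a
  nearest boundary point, and bounding every term by the triangle inequality, gives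
  |z-y|/(d(z)+|z-y|) \<le> b(z,y) \<le> |z-y|/d(z). Combined with the hypothesis this makes
  |f z - f y| comparable with |z - y| near z: it lies between d'/(2Ld) |z-y| and 2Ld'/d |z-y|,
  where d = d(z) in G and d' = d(f z) in D. Injectivity, continuity of f and of its inverse
  follow, and the ratio of the two constants bounds the linear dilatation by 4 L^2.\<close>

lemma ball_infdist_frontier_subset:
  fixes S :: "'a::real_normed_vector set"
  assumes "z \<in> S"
  shows "ball z (infdist z (frontier S)) \<subseteq> S"
proof
  fix y assume y: "y \<in> ball z (infdist z (frontier S))"
  show "y \<in> S"
  proof (rule ccontr)
    assume "y \<notin> S"
    have "z \<in> ball z (infdist z (frontier S))"
      using y by (simp add: le_less_trans [OF zero_le_dist])
    then have "ball z (infdist z (frontier S)) \<inter> S \<noteq> {}"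
      using assms by blast
    moreover have "ball z (infdist z (frontier S)) - S \<noteq> {}"
      using y \<open>y \<notin> S\<close> by blast
    ultimately have "ball z (infdist z (frontier S)) \<inter> frontier S \<noteq> {}"
      by (rule connected_Int_frontier [OF connected_ball])
    then obtain v where "dist z v < infdist z (frontier S)" "v \<in> frontier S" by auto
    then show False using infdist_le [of v "frontier S" z] by linarith
  qed
qed

lemma infdist_frontier_pos:
  fixes S :: "'a::real_normed_vector set"
  assumes "open S" "S \<noteq> UNIV" "z \<in> S"
  shows "0 < infdist z (frontier S)"
proof (rule infdist_pos_not_in_closed)
  show "frontier S \<noteq> {}"
    using assms by (intro frontier_not_empty) auto
  show "z \<notin> frontier S"
    using assms by (simp add: frontier_def interior_open)
qed simp

lemma b_inf_summand_le_2:
  "dist z y / max (dist z w) (dist y w) \<le> 2"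
proof (cases "max (dist z w) (dist y w) = 0")
  case False
  have "dist z y \<le> 2 * max (dist z w) (dist y w)"
    using dist_triangle3 [of z y w] by (simp add: dist_commute)
  with False show ?thesis by (simp add: divide_le_eq)
qed simp

lemma b_inf_ge_summand:
  assumes "w \<in> frontier S"
  shows "dist z y / max (dist z w) (dist y w) \<le> b_inf S z y"
  unfolding b_inf_def
  by (rule cSUP_upper [OF assms]) (auto intro: bdd_aboveI2 b_inf_summand_le_2)

lemma b_inf_ge_infdist:
  fixes S :: "'a::euclidean_space set"
  assumes "S \<noteq> {}" "S \<noteq> UNIV"
  shows "dist z y / (infdist z (frontier S) + dist z y) \<le> b_inf S z y"
proof -
  obtain w where w: "w \<in> frontier S" "infdist z (frontier S) = dist z w"
    using infdist_attains_inf [of "frontier S" z] frontier_not_empty [OF assms] by auto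
  have "max (dist z w) (dist y w) \<le> infdist z (frontier S) + dist z y"
    using w dist_triangle [of y w z] by (auto simp: dist_commute)
  then have "dist z y / (infdist z (frontier S) + dist z y) \<le> dist z y / max (dist z w) (dist y w)"
  proof (cases "z = y")
    case False
    then have "0 < max (dist z w) (dist y w)"
      by (metis dist_commute dist_pos_lt max.strict_coboundedI1 max.strict_coboundedI2)
    with False show ?thesis
      using \<open>max (dist z w) (dist y w) \<le> _\<close> by (intro divide_left_mono) auto
  qed simp
  also have "\<dots> \<le> b_inf S z y"
    by (rule b_inf_ge_summand [OF w(1)])
  finally show ?thesis .
qed

lemma b_inf_le_infdist:
  fixes S :: "'a::euclidean_space set"
  assumes "S \<noteq> {}" "S \<noteq> UNIV" "0 < infdist z (frontier S)"
  shows "b_inf S z y \<le> dist z y / infdist z (frontier S)"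
  unfolding b_inf_def
proof (rule cSUP_least [OF frontier_not_empty [OF assms(1,2)]])
  fix w assume "w \<in> frontier S"
  then have "infdist z (frontier S) \<le> max (dist z w) (dist y w)"
    using infdist_le [of w "frontier S" z] by linarith
  then show "dist z y / max (dist z w) (dist y w) \<le> dist z y / infdist z (frontier S)"
    using assms(3) by (intro divide_left_mono) auto
qed

lemma le_two_mul_if_div_add_le:
  fixes d t q :: real
  assumes "0 < d" "0 \<le> t" "t / (d + t) \<le> q" "t \<le> d \<or> q \<le> 1/2"
  shows "t \<le> 2 * q * d"
proof -
  have tq: "t \<le> q * (d + t)" using assms(1-3) by (simp add: divide_le_eq)
  have "0 \<le> q" using assms(1-3) by (smt (verit) divide_nonneg_nonneg)
  from assms(4) show ?thesis
  proof
    assume "t \<le> d"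
    then have "q * (d + t) \<le> q * (2 * d)" using \<open>0 \<le> q\<close> by (intro mult_left_mono) auto
    with tq show ?thesis by simp
  next
    assume "q \<le> 1/2"
    then have "q * t \<le> t / 2" using assms(2) mult_right_mono [of q "1/2" t] by simp
    with tq show ?thesis by (simp add: algebra_simps)
  qed
qed

lemma dist_le_if_b_inf_le:
  fixes S :: "'a::euclidean_space set" and T :: "'b::euclidean_space set"
  assumes S: "open S" "S \<noteq> UNIV" "z \<in> S" and T: "open T" "T \<noteq> UNIV" "w \<in> T"
    and "0 < L" and b: "b_inf S z y \<le> L * b_inf T w u"
    and near: "dist z y \<le> infdist z (frontier S) \<or> dist w u \<le> infdist w (frontier T) / (2 * L)"
  shows "dist z y \<le> 2 * L * infdist z (frontier S) / infdist w (frontier T) * dist w u"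
proof -
  define d d' where "d = infdist z (frontier S)" and "d' = infdist w (frontier T)"
  have "0 < d" "0 < d'"
    using infdist_frontier_pos S T by (auto simp: d_def d'_def)
  have "dist z y / (d + dist z y) \<le> b_inf S z y"
    using b_inf_ge_infdist S unfolding d_def by blast
  also have "\<dots> \<le> L * b_inf T w u" by (rule b)
  also have "\<dots> \<le> L * (dist w u / d')"
    using b_inf_le_infdist [of T w u] T \<open>0 < d'\<close> \<open>0 < L\<close> unfolding d'_def
    by (intro mult_left_mono) auto
  finally have ratio: "dist z y / (d + dist z y) \<le> L * (dist w u / d')" .
  have "dist z y \<le> d \<or> L * (dist w u / d') \<le> 1/2"
    using near \<open>0 < d'\<close> \<open>0 < L\<close> by (auto simp: d_def d'_def field_simps)
  with \<open>0 < d\<close> ratio have "dist z y \<le> 2 * (L * (dist w u / d')) * d"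
    by (intro le_two_mul_if_div_add_le) auto
  then show ?thesis by (simp add: d_def d'_def field_simps)
qed

lemma continuous_on_if_Lipschitz_at_points:
  assumes "\<And>z. z \<in> S \<Longrightarrow> \<exists>\<delta>>0. \<exists>k. \<forall>y\<in>S. dist z y < \<delta> \<longrightarrow> dist (f z) (f y) \<le> k * dist z y"
  shows "continuous_on S f"
  unfolding continuous_on_iff
proof (intro ballI allI impI)
  fix z and e :: real
  assume "z \<in> S" "0 < e"
  then obtain \<delta> k where "0 < \<delta>" and Lip: "\<forall>y\<in>S. dist z y < \<delta> \<longrightarrow> dist (f z) (f y) \<le> k * dist z y"
    using assms by blast
  show "\<exists>\<delta>'>0. \<forall>y\<in>S. dist y z < \<delta>' \<longrightarrow> dist (f y) (f z) < e"
  proof (intro exI [of _ "min \<delta> (e / (\<bar>k\<bar> + 1))"] conjI ballI impI)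
    show "0 < min \<delta> (e / (\<bar>k\<bar> + 1))"
      using \<open>0 < \<delta>\<close> \<open>0 < e\<close> by simp
    fix y assume "y \<in> S" and y: "dist y z < min \<delta> (e / (\<bar>k\<bar> + 1))"
    then have "dist (f z) (f y) \<le> k * dist z y"
      using Lip by (simp add: dist_commute)
    also have "\<dots> \<le> (\<bar>k\<bar> + 1) * dist z y"
      by (intro mult_right_mono) auto
    also have "\<dots> < (\<bar>k\<bar> + 1) * (e / (\<bar>k\<bar> + 1))"
      using y by (intro mult_strict_left_mono) (auto simp: dist_commute)
    also have "\<dots> = e" by simp
    finally show "dist (f y) (f z) < e"
      by (simp add: dist_commute)
  qed
qed

lemma lin_dil_le_if_sphere_bounds:
  fixes f :: "'a::euclidean_space \<Rightarrow> 'b::euclidean_space"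
  assumes "0 < \<delta>" "0 < c"
    and bounds: "\<And>r y. 0 < r \<Longrightarrow> r < \<delta> \<Longrightarrow> y \<in> sphere z r \<Longrightarrow>
                   c * r \<le> dist (f y) (f z) \<and> dist (f y) (f z) \<le> C * r"
  shows "lin_dil f z \<le> ereal (C / c)"
proof -
  have "Lf f z r / lf f z r \<le> C / c" if r: "0 < r" "r < \<delta>" for r
  proof -
    have ne: "sphere z r \<noteq> {}"
      using r by simp
    have "Lf f z r \<le> C * r"
      unfolding Lf_def by (rule cSUP_least [OF ne]) (use bounds r in blast)
    moreover have "c * r \<le> lf f z r"
      unfolding lf_def by (rule cINF_greatest [OF ne]) (use bounds r in blast)
    moreover have "0 \<le> C * r"
      using ne bounds [OF r] \<open>0 < c\<close> r by (meson ex_in_conv order.trans zero_le_dist)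
    ultimately have "Lf f z r / lf f z r \<le> (C * r) / (c * r)"
      using \<open>0 < c\<close> r by (intro frac_le) auto
    also have "\<dots> = C / c"
      using r by simp
    finally show ?thesis .
  qed
  then have "eventually (\<lambda>r. ereal (Lf f z r / lf f z r) \<le> ereal (C / c)) (at_right 0)"
    unfolding eventually_at_right_field using \<open>0 < \<delta>\<close> by auto
  then show ?thesis
    unfolding lin_dil_def by (rule Limsup_bounded)
qed

locale b_inf_bilipschitz =
  fixes G :: "'a::euclidean_space set" and D :: "'b::euclidean_space set"
    and f :: "'a \<Rightarrow> 'b" and L :: real
  assumes open_G: "open G" and G_neq_UNIV: "G \<noteq> UNIV"
    and open_D: "open D" and D_neq_UNIV: "D \<noteq> UNIV"
    and image_eq: "f ` G = D" and L_pos: "0 < L"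
    and b_inf_le_image: "\<And>z y. z \<in> G \<Longrightarrow> y \<in> G \<Longrightarrow> b_inf G z y \<le> L * b_inf D (f z) (f y)"
    and b_inf_image_le: "\<And>z y. z \<in> G \<Longrightarrow> y \<in> G \<Longrightarrow> b_inf D (f z) (f y) \<le> L * b_inf G z y"
begin

lemma in_D: "z \<in> G \<Longrightarrow> f z \<in> D"
  using image_eq by blast

lemma dist_le_dist_image:
  assumes "z \<in> G" "y \<in> G"
    and "dist z y \<le> infdist z (frontier G) \<or> dist (f z) (f y) \<le> infdist (f z) (frontier D) / (2 * L)"
  shows "dist z y \<le> 2 * L * infdist z (frontier G) / infdist (f z) (frontier D) * dist (f z) (f y)"
  using assms open_G G_neq_UNIV open_D D_neq_UNIV L_pos in_D b_inf_le_image
  by (intro dist_le_if_b_inf_le) auto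

lemma dist_image_le_dist:
  assumes "z \<in> G" "y \<in> G"
    and "dist (f z) (f y) \<le> infdist (f z) (frontier D) \<or> dist z y \<le> infdist z (frontier G) / (2 * L)"
  shows "dist (f z) (f y) \<le> 2 * L * infdist (f z) (frontier D) / infdist z (frontier G) * dist z y"
  using assms open_G G_neq_UNIV open_D D_neq_UNIV L_pos in_D b_inf_image_le
  by (intro dist_le_if_b_inf_le) auto

lemma inj_on_f: "inj_on f G"
proof (rule inj_onI)
  fix z y assume "z \<in> G" "y \<in> G" "f z = f y"
  moreover have "0 \<le> infdist (f z) (frontier D) / (2 * L)"
    using L_pos by (simp add: infdist_nonneg)
  ultimately have "dist z y \<le> 0"
    using dist_le_dist_image [of z y] by simp
  then show "z = y" by simp
qed

lemma continuous_on_f: "continuous_on G f"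
proof (rule continuous_on_if_Lipschitz_at_points)
  fix z assume "z \<in> G"
  have "0 < infdist z (frontier G) / (2 * L)"
    using infdist_frontier_pos [OF open_G G_neq_UNIV \<open>z \<in> G\<close>] L_pos by simp
  with dist_image_le_dist [OF \<open>z \<in> G\<close>]
  show "\<exists>\<delta>>0. \<exists>k. \<forall>y\<in>G. dist z y < \<delta> \<longrightarrow> dist (f z) (f y) \<le> k * dist z y"
    by (meson less_imp_le)
qed

lemma continuous_on_inv_into: "continuous_on D (inv_into G f)"
proof (rule continuous_on_if_Lipschitz_at_points)
  fix x assume "x \<in> D"
  then obtain z where z: "z \<in> G" "x = f z"
    using image_eq by blast
  have "0 < infdist x (frontier D) / (2 * L)"
    using infdist_frontier_pos [OF open_D D_neq_UNIV \<open>x \<in> D\<close>] L_pos by simp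
  moreover have "dist (inv_into G f x) (inv_into G f x')
      \<le> 2 * L * infdist z (frontier G) / infdist x (frontier D) * dist x x'"
    if "x' \<in> D" "dist x x' < infdist x (frontier D) / (2 * L)" for x'
  proof -
    obtain y where "y \<in> G" "x' = f y"
      using \<open>x' \<in> D\<close> image_eq by blast
    then show ?thesis
      using that z dist_le_dist_image [of z y] inj_on_f by auto
  qed
  ultimately show "\<exists>\<delta>>0. \<exists>k. \<forall>x'\<in>D. dist x x' < \<delta> \<longrightarrow>
      dist (inv_into G f x) (inv_into G f x') \<le> k * dist x x'"
    by blast
qed

lemma homeomorphism_inv_into: "homeomorphism G D f (inv_into G f)"
  using image_eq inj_on_f continuous_on_f continuous_on_inv_into by (auto simp: homeomorphism_def)

lemma lin_dil_le:
  assumes "z \<in> G"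
  shows "lin_dil f z \<le> ereal (4 * L\<^sup>2)"
proof -
  define d d' where "d = infdist z (frontier G)" and "d' = infdist (f z) (frontier D)"
  have "0 < d" "0 < d'"
    using infdist_frontier_pos [OF open_G G_neq_UNIV assms]
      infdist_frontier_pos [OF open_D D_neq_UNIV in_D [OF assms]]
    by (auto simp: d_def d'_def)
  have sphere_bounds: "d' / (2 * L * d) * r \<le> dist (f y) (f z) \<and> dist (f y) (f z) \<le> 2 * L * d' / d * r"
    if "0 < r" "r < min d (d / (2 * L))" "y \<in> sphere z r" for r y
  proof
    have r: "dist z y = r" "r \<le> d" "r \<le> d / (2 * L)"
      using that by auto
    then have "y \<in> G"
      using that ball_infdist_frontier_subset [OF assms] by (auto simp: d_def)
    have "r \<le> 2 * L * d / d' * dist (f z) (f y)"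
      using dist_le_dist_image [OF assms \<open>y \<in> G\<close>] r by (simp add: d_def d'_def)
    then show "d' / (2 * L * d) * r \<le> dist (f y) (f z)"
      using \<open>0 < d\<close> \<open>0 < d'\<close> L_pos by (simp add: dist_commute field_simps)
    show "dist (f y) (f z) \<le> 2 * L * d' / d * r"
      using dist_image_le_dist [OF assms \<open>y \<in> G\<close>] r by (simp add: d_def d'_def dist_commute)
  qed
  have "lin_dil f z \<le> ereal ((2 * L * d' / d) / (d' / (2 * L * d)))"
    by (rule lin_dil_le_if_sphere_bounds [where \<delta> = "min d (d / (2 * L))" and c = "d' / (2 * L * d)"
          and C = "2 * L * d' / d" and f = f and z = z, OF _ _ sphere_bounds])
      (use \<open>0 < d\<close> \<open>0 < d'\<close> L_pos in auto)
  also have "(2 * L * d' / d) / (d' / (2 * L * d)) = 4 * L\<^sup>2"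
    using \<open>0 < d\<close> \<open>0 < d'\<close> L_pos by (simp add: field_simps power2_eq_square)
  finally show ?thesis .
qed

end

theorem theorem4p10:
  fixes G D :: "'a::euclidean_space set" and f :: "'a \<Rightarrow> 'a" and L :: real
  assumes "domain G" "G \<noteq> UNIV" "domain D" "D \<noteq> UNIV"
    and "f ` G = D"
    and "L \<ge> 1"
    and "\<And>z1 z2. z1 \<in> G \<Longrightarrow> z2 \<in> G \<Longrightarrow>
           b_inf G z1 z2 / L \<le> b_inf D (f z1) (f z2) \<and> b_inf D (f z1) (f z2) \<le> L * b_inf G z1 z2"
  shows "quasiconformal G D f \<and> (\<forall>z\<in>G. lin_dil f z \<le> ereal (4 * L^2))"
proof -
  interpret b_inf_bilipschitz G D f L
  proof
    show "b_inf G z y \<le> L * b_inf D (f z) (f y)" if "z \<in> G" "y \<in> G" for z y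
      using assms(6) assms(7) [OF that] by (simp add: divide_le_eq mult.commute)
  qed (use assms in \<open>auto simp: domain_def\<close>)
  show ?thesis
    unfolding quasiconformal_def using homeomorphism_inv_into lin_dil_le by blast
qed

end
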